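(* If $\mathcal{T}$ is a single-elimination tournament with at least $2$ players and $\sigma$ is a scoring system with distinct subset sums, then \[\dim(\mathcal{T},\sigma)=\max_{x\in M(\mathcal{T})}\Big(|P(x)|-\max_{u\in N^-(x)}|P(u)|\Big).\]
   Context: A single-elimination tournament is a finite directed graph $\mathcal{T}$ such that: (a) $\mathcal{T}$ has exactly one sink (vertex with no out-neighbours); (b) every non-sink vertex has exactly one out-neighbour; (c) $\mathcal{T}$ has no directed cycles; (d) $|N^-(v)|\ne 1$ for every vertex $v$, where $N^-(v)$ denotes the set of in-neighbours of $v$. The players $P(\mathcal{T})$ are the sources and the matches are $M(\mathcal{T})=V(\mathcal{T})\setminus P(\mathcal{T})$. For a vertex $u$, $P(u)$ is the set of players $a$ for which there is a directed walk from $a$ to $u$ (length $0$ allowed). A bracket is a function $B:V(\mathcal{T})\to P(\mathcal{T})$ with $B(a)=a$ for every player $a$ and $B(x)\in\{B(u):u\in N^-(x)\}$ for every match $x$. A scoring system is any function $\sigma:M(\mathcal{T})\to\mathbb{R}_{>0}$; it has distinct subset sums if for any two sets of matches $M,M'\subseteq M(\mathcal{T})$, $\sum_{x\in M}\sigma(x)=\sum_{x\in M'}\sigma(x)$ implies $M=M'$. For brackets $B,B'$ let $\mathrm{score}_\sigma(B,B')=\sum_{x\in M(\mathcal{T}):\,B(x)=B'(x)}\sigma(x)$. A set of brackets $\mathcal{B}$ is $\sigma$-resolving if for every pair of distinct brackets $B\ne B'$ there is $B_i\in\mathcal{B}$ with $\mathrm{score}_\sigma(B_i,B)\ne\mathrm{score}_\sigma(B_i,B')$.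 $\dim(\mathcal{T},\sigma)$ denotes the minimum size of a $\sigma$-resolving set. *)

theory Defs
  imports Complex_Main "HOL-Library.FuncSet"
begin

text \<open>A finite directed graph is given by a finite vertex set V and an edge set
E \<subseteq> V \<times> V ((u,v) \<in> E means an arc from u to v).\<close>

definition in_nbrs :: "('v \<times> 'v) set \<Rightarrow> 'v \<Rightarrow> 'v set" where
  "in_nbrs E v = {u. (u, v) \<in> E}"

definition out_nbrs :: "('v \<times> 'v) set \<Rightarrow> 'v \<Rightarrow> 'v set" where
  "out_nbrs E v = {w. (v, w) \<in> E}"

definition single_elim_tournament :: "'v set \<Rightarrow> ('v \<times> 'v) set \<Rightarrow> bool" where
  "single_elim_tournament V E \<longleftrightarrow>
     finite V \<and> E \<subseteq> V \<times> V \<and>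
     (\<exists>!s. s \<in> V \<and> out_nbrs E s = {}) \<and>
     (\<forall>v\<in>V. out_nbrs E v \<noteq> {} \<longrightarrow> card (out_nbrs E v) = 1) \<and>
     acyclic E \<and>
     (\<forall>v\<in>V. card (in_nbrs E v) \<noteq> 1)"

definition players :: "'v set \<Rightarrow> ('v \<times> 'v) set \<Rightarrow> 'v set" where
  "players V E = {v \<in> V. in_nbrs E v = {}}"

definition matches :: "'v set \<Rightarrow> ('v \<times> 'v) set \<Rightarrow> 'v set" where
  "matches V E = V - players V E"

definition Pl :: "'v set \<Rightarrow> ('v \<times> 'v) set \<Rightarrow> 'v \<Rightarrow> 'v set" where
  "Pl V E u = {a \<in> players V E. (a, u) \<in> E\<^sup>*}"

text \<open>Brackets are functions V \<rightarrow> P(T), represented extensionally (undefined outside V).\<close>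
definition bracket :: "'v set \<Rightarrow> ('v \<times> 'v) set \<Rightarrow> ('v \<Rightarrow> 'v) \<Rightarrow> bool" where
  "bracket V E B \<longleftrightarrow>
     B \<in> extensional V \<and> (\<forall>v\<in>V. B v \<in> players V E) \<and>
     (\<forall>a\<in>players V E. B a = a) \<and>
     (\<forall>x\<in>matches V E. B x \<in> B ` in_nbrs E x)"

definition scoring_system :: "'v set \<Rightarrow> ('v \<times> 'v) set \<Rightarrow> ('v \<Rightarrow> real) \<Rightarrow> bool" where
  "scoring_system V E \<sigma> \<longleftrightarrow> (\<forall>x\<in>matches V E. \<sigma> x > 0)"

definition distinct_subset_sums :: "'v set \<Rightarrow> ('v \<times> 'v) set \<Rightarrow> ('v \<Rightarrow> real) \<Rightarrow> bool" where
  "distinct_subset_sums V E \<sigma> \<longleftrightarrow>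
     (\<forall>M M'. M \<subseteq> matches V E \<longrightarrow> M' \<subseteq> matches V E \<longrightarrow>
        sum \<sigma> M = sum \<sigma> M' \<longrightarrow> M = M')"

definition score :: "'v set \<Rightarrow> ('v \<times> 'v) set \<Rightarrow> ('v \<Rightarrow> real) \<Rightarrow> ('v \<Rightarrow> 'v) \<Rightarrow> ('v \<Rightarrow> 'v) \<Rightarrow> real" where
  "score V E \<sigma> B B' = sum \<sigma> {x \<in> matches V E. B x = B' x}"

definition resolving :: "'v set \<Rightarrow> ('v \<times> 'v) set \<Rightarrow> ('v \<Rightarrow> real) \<Rightarrow> ('v \<Rightarrow> 'v) set \<Rightarrow> bool" where
  "resolving V E \<sigma> \<B> \<longleftrightarrow>
     (\<forall>B\<in>\<B>. bracket V E B) \<and>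
     (\<forall>B B'. bracket V E B \<longrightarrow> bracket V E B' \<longrightarrow> B \<noteq> B' \<longrightarrow>
        (\<exists>Bi\<in>\<B>. score V E \<sigma> Bi B \<noteq> score V E \<sigma> Bi B'))"

definition metric_dim :: "'v set \<Rightarrow> ('v \<times> 'v) set \<Rightarrow> ('v \<Rightarrow> real) \<Rightarrow> nat" where
  "metric_dim V E \<sigma> = (LEAST k. \<exists>\<B>. finite \<B> \<and> resolving V E \<sigma> \<B> \<and> card \<B> = k)"

end

theory Submission
  imports Defs "HOL-Library.Product_Lexorder"
begin

(*
  All brackets below are seeded: the player with the higher seed wins every match.

  Let a and a' enter a match x through different in-neighbours.  Seeding
  a first and a' second, or the other way round, gives two brackets that differ exactly
  at the matches whose subtree contains both a and a'; these all lie above x.  A bracket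
  in which neither a nor a' wins x lets neither of them win above x, so it scores both
  brackets alike.  Hence for a resolving set B the players of P(x) that win x in no
  bracket of B all come from one in-neighbour u, and |P(x)| <= |B| + |P(u)|.

  With distinct subset sums, a set of brackets resolves as soon as every
  player of P(v) outside the heavy (largest) in-neighbour of v wins v in some bracket
  of the set: compare the agreement sets at a lowest match where two brackets differ.
  Such a player joins the heavy path descending from the final at a unique match z, and
  at most D = max_x (|P(x)| - max_u |P(u)|) players join at z.  Numbering them below D
  and letting bracket i seed number i at every z highest (higher joins first) makes
  each of them win its z, hence every match below, so D brackets suffice.
*)

locale tournament =
  fixes V :: "'v set" and E :: "('v \<times> 'v) set"
  assumes single_elim: "single_elim_tournament V E"
begin

abbreviation "pl \<equiv> players V E"
abbreviation "M \<equiv> matches V E"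
abbreviation "P \<equiv> Pl V E"

lemma finite_V: "finite V" and E_subset: "E \<subseteq> V \<times> V" and acyclic_E: "acyclic E"
  and card_in_nbrs_ne_1: "v \<in> V \<Longrightarrow> card (in_nbrs E v) \<noteq> 1"
  and card_out_nbrs: "v \<in> V \<Longrightarrow> out_nbrs E v \<noteq> {} \<Longrightarrow> card (out_nbrs E v) = 1"
  and unique_sink: "\<exists>!s. s \<in> V \<and> out_nbrs E s = {}"
  using single_elim unfolding single_elim_tournament_def by auto

lemma finite_E: "finite E"
  using finite_subset[OF E_subset] finite_V by simp

lemma wf_E: "wf E"
  using finite_acyclic_wf[OF finite_E acyclic_E] .

lemma out_edge_unique:
  assumes "(v, w) \<in> E" "(v, w') \<in> E"
  shows "w = w'"
proof -
  have "w \<in> out_nbrs E v" "w' \<in> out_nbrs E v"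
    using assms by (auto simp: out_nbrs_def)
  moreover have "card (out_nbrs E v) = 1"
    using card_out_nbrs[of v] calculation assms(1) E_subset by auto
  ultimately show ?thesis by (metis card_1_singletonE singletonD)
qed

lemma reach_V: "(a, b) \<in> E\<^sup>* \<Longrightarrow> a \<in> V \<Longrightarrow> b \<in> V"
  by (induction rule: rtrancl_induct) (use E_subset in auto)

lemma not_reach_back: "(x, y) \<in> E\<^sup>+ \<Longrightarrow> (y, x) \<notin> E\<^sup>*"
  using acyclic_E by (auto simp: acyclic_def dest: trancl_rtrancl_trancl)

lemma reach_from_edge:
  assumes "(u, x) \<in> E" "(u, z) \<in> E\<^sup>*"
  shows "z = u \<or> (x, z) \<in> E\<^sup>*"
  using assms(2)
proof (cases rule: converse_rtranclE)
  case (step y)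
  then show ?thesis using out_edge_unique[OF assms(1), of y] by simp
qed simp

lemma reach_linear:
  assumes "(a, x) \<in> E\<^sup>*" "(a, y) \<in> E\<^sup>*"
  shows "(x, y) \<in> E\<^sup>* \<or> (y, x) \<in> E\<^sup>*"
  using assms(1)
proof (induction rule: rtrancl_induct)
  case base
  then show ?case using assms(2) by simp
next
  case (step x x')
  from step.IH show ?case
  proof
    assume "(x, y) \<in> E\<^sup>*"
    then show ?thesis using reach_from_edge[OF step.hyps(2)] step.hyps(2) by auto
  next
    assume "(y, x) \<in> E\<^sup>*"
    then show ?thesis using step.hyps(2) by (meson rtrancl.rtrancl_into_rtrancl)
  qed
qed

lemma matches_iff: "x \<in> M \<longleftrightarrow> x \<in> V \<and> in_nbrs E x \<noteq> {}"
  by (auto simp: matches_def players_def)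

lemma edge_target_match: "(u, x) \<in> E \<Longrightarrow> x \<in> M"
  using E_subset by (auto simp: matches_iff in_nbrs_def)

lemma trancl_target_match: "(u, x) \<in> E\<^sup>+ \<Longrightarrow> x \<in> M"
  by (blast dest: tranclD2 edge_target_match)

lemma reach_player: "a \<in> pl \<Longrightarrow> (w, a) \<in> E\<^sup>* \<Longrightarrow> w = a"
  by (erule rtranclE) (auto simp: players_def in_nbrs_def)

lemma finite_in_nbrs: "finite (in_nbrs E x)"
  using finite_subset[OF _ finite_V, of "in_nbrs E x"] E_subset by (auto simp: in_nbrs_def)

lemma in_nbrs_V: "u \<in> in_nbrs E x \<Longrightarrow> u \<in> V"
  using E_subset by (auto simp: in_nbrs_def)

lemma Pl_subset_players: "P x \<subseteq> pl"
  by (auto simp: Pl_def)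

lemma finite_Pl: "finite (P x)"
  using finite_subset[OF Pl_subset_players] finite_V by (auto simp: players_def)

lemma Pl_imp_V: "a \<in> P v \<Longrightarrow> v \<in> V"
  using reach_V by (auto simp: Pl_def players_def)

lemma Pl_player: "a \<in> pl \<Longrightarrow> P a = {a}"
  using reach_player by (auto simp: Pl_def)

lemma Pl_mono: "(u, x) \<in> E\<^sup>* \<Longrightarrow> P u \<subseteq> P x"
  by (auto simp: Pl_def)

lemma Pl_match_UN:
  assumes "x \<in> M"
  shows "P x = (\<Union>u\<in>in_nbrs E x. P u)"
proof
  show "P x \<subseteq> (\<Union>u\<in>in_nbrs E x. P u)"
  proof
    fix a assume "a \<in> P x"
    then have "a \<noteq> x" "(a, x) \<in> E\<^sup>*"
      using assms by (auto simp: Pl_def matches_def)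
    then obtain u where "(a, u) \<in> E\<^sup>*" "(u, x) \<in> E"
      by (metis rtranclE)
    then show "a \<in> (\<Union>u\<in>in_nbrs E x. P u)"
      using \<open>a \<in> P x\<close> by (auto simp: Pl_def in_nbrs_def)
  qed
  show "(\<Union>u\<in>in_nbrs E x. P u) \<subseteq> P x"
    by (simp add: UN_subset_iff in_nbrs_def Pl_mono r_into_rtrancl)
qed

lemma Pl_in_nbrs_disjoint:
  assumes "u \<in> in_nbrs E x" "u' \<in> in_nbrs E x" "a \<in> P u" "a \<in> P u'"
  shows "u = u'"
proof -
  have edges: "(u, x) \<in> E" "(u', x) \<in> E"
    using assms by (auto simp: in_nbrs_def)
  have "(u, u') \<in> E\<^sup>* \<or> (u', u) \<in> E\<^sup>*"
    using assms reach_linear by (auto simp: Pl_def)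
  then show ?thesis
  proof
    assume "(u, u') \<in> E\<^sup>*"
    then show ?thesis
      using reach_from_edge[OF edges(1)] not_reach_back[OF r_into_trancl[OF edges(2)]] by blast
  next
    assume "(u', u) \<in> E\<^sup>*"
    then show ?thesis
      using reach_from_edge[OF edges(2)] not_reach_back[OF r_into_trancl[OF edges(1)]] by blast
  qed
qed

lemma Pl_nonempty: "v \<in> V \<Longrightarrow> P v \<noteq> {}"
proof (induction v rule: wf_induct_rule[OF wf_E])
  case (1 v)
  show ?case
  proof (cases "v \<in> pl")
    case True
    then show ?thesis by (simp add: Pl_player)
  next
    case False
    then obtain u where "(u, v) \<in> E"
      using "1.prems" by (auto simp: players_def in_nbrs_def)
    then show ?thesis
      using "1.IH" E_subset Pl_mono[of u v] by blast
  qed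
qed

lemma Pl_psubset:
  assumes "(u, x) \<in> E"
  shows "P u \<subset> P x"
proof -
  \<comment> \<open>the only use of the condition that no vertex has exactly one in-neighbour\<close>
  have u: "u \<in> in_nbrs E x" and x: "x \<in> V"
    using assms E_subset by (auto simp: in_nbrs_def)
  have "in_nbrs E x \<noteq> {u}"
    using card_in_nbrs_ne_1[OF x] by auto
  then obtain u' where u': "u' \<in> in_nbrs E x" "u' \<noteq> u"
    using u by blast
  then obtain b where b: "b \<in> P u'"
    using Pl_nonempty[OF in_nbrs_V] by blast
  have "b \<in> P x"
    using Pl_match_UN[OF edge_target_match[OF assms]] u'(1) b by blast
  moreover have "b \<notin> P u"
    using Pl_in_nbrs_disjoint[OF u u'(1)] u'(2) b by blast
  ultimately show ?thesis
    using Pl_mono[OF r_into_rtrancl[OF assms]] by blast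
qed

lemma card_Pl_less:
  assumes "(u, x) \<in> E\<^sup>+"
  shows "card (P u) < card (P x)"
  using assms
proof (induction rule: trancl_induct)
  case (base x)
  then show ?case
    using psubset_card_mono[OF finite_Pl Pl_psubset] by blast
next
  case (step y z)
  then have "card (P y) < card (P z)"
    using psubset_card_mono[OF finite_Pl Pl_psubset] by blast
  then show ?case
    using step.IH by linarith
qed

lemma reach_if_Pl_meets_two_in_nbrs:
  assumes "u \<in> in_nbrs E x" "u' \<in> in_nbrs E x" "u \<noteq> u'" "a \<in> P u" "a' \<in> P u'"
    and "a \<in> P y" "a' \<in> P y"
  shows "(x, y) \<in> E\<^sup>*"
proof (rule ccontr)
  assume not_reach: "(x, y) \<notin> E\<^sup>*"
  have "(a, x) \<in> E\<^sup>*"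
    using assms(1,4) Pl_mono[of u x] by (auto simp: in_nbrs_def Pl_def)
  moreover have "(a, y) \<in> E\<^sup>*"
    using assms(6) by (simp add: Pl_def)
  ultimately have "(y, x) \<in> E\<^sup>*"
    using reach_linear not_reach by blast
  then have "(y, x) \<in> E\<^sup>+"
    using not_reach by (auto simp: rtrancl_eq_or_trancl)
  then obtain w where w: "(y, w) \<in> E\<^sup>*" "w \<in> in_nbrs E x"
    by (auto simp: in_nbrs_def dest: tranclD2)
  then have "a \<in> P w" "a' \<in> P w"
    using assms(6,7) Pl_mono by auto
  then have "w = u" "w = u'"
    using Pl_in_nbrs_disjoint w(2) assms(1,2,4,5) by blast+
  then show False
    using assms(3) by simp
qed

lemma ex_inj_players_nat: "\<exists>t :: 'v \<Rightarrow> nat. inj_on t pl"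
  using finite_imp_inj_to_nat_seg[of pl] finite_V by (auto simp: players_def)

lemma bracket_player: "bracket V E B \<Longrightarrow> a \<in> pl \<Longrightarrow> B a = a"
  by (simp add: bracket_def)

lemma bracket_winner_from_in_nbr:
  assumes "bracket V E B" "x \<in> M"
  obtains u where "u \<in> in_nbrs E x" "B x = B u"
  using assms unfolding bracket_def by blast

lemma bracket_Pl:
  assumes "bracket V E B" "v \<in> V"
  shows "B v \<in> P v"
  using assms(2)
proof (induction v rule: wf_induct_rule[OF wf_E])
  case (1 v)
  show ?case
  proof (cases "v \<in> pl")
    case True
    then show ?thesis using bracket_player[OF assms(1)] by (simp add: Pl_player)
  next
    case False
    then have "v \<in> M" using "1.prems" by (simp add: matches_def)
    then obtain u where u: "u \<in> in_nbrs E v" "B v = B u"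
      using assms(1) bracket_winner_from_in_nbr by blast
    have edge: "(u, v) \<in> E"
      using u(1) by (simp add: in_nbrs_def)
    then have "B u \<in> P u"
      using "1.IH" in_nbrs_V[OF u(1)] by blast
    then show ?thesis
      using u(2) Pl_mono[OF r_into_rtrancl[OF edge]] by auto
  qed
qed

lemma bracket_winner_won_below:
  assumes "bracket V E B" "(x, y) \<in> E\<^sup>*" "a \<in> P x" "B y = a"
  shows "B x = a"
  using assms(2,4)
proof (induction rule: rtrancl_induct)
  case (step y z)
  obtain w where w: "w \<in> in_nbrs E z" "B z = B w"
    using bracket_winner_from_in_nbr[OF assms(1) edge_target_match[OF step.hyps(2)]] by blast
  have "a \<in> P w"
    using bracket_Pl[OF assms(1) in_nbrs_V[OF w(1)]] w(2) step.prems by simp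
  moreover have "a \<in> P y"
    using Pl_mono[OF step.hyps(1)] assms(3) by blast
  moreover have "y \<in> in_nbrs E z"
    using step.hyps(2) by (simp add: in_nbrs_def)
  ultimately have "w = y"
    using Pl_in_nbrs_disjoint[OF w(1)] by blast
  then show ?case
    using step w by simp
qed simp

definition seeded_bracket :: "('v \<Rightarrow> 'a::linorder) \<Rightarrow> 'v \<Rightarrow> 'v" where
  "seeded_bracket r v = (if v \<in> V then THE a. a \<in> P v \<and> (\<forall>b\<in>P v. r b \<le> r a) else undefined)"

lemma seeded_bracket_eqI:
  assumes r: "inj_on r pl" and a: "a \<in> P v" and top: "\<And>b. b \<in> P v \<Longrightarrow> r b \<le> r a"
  shows "seeded_bracket r v = a"
proof -
  have "a' = a" if "a' \<in> P v" "\<forall>b\<in>P v. r b \<le> r a'" for a'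
  proof -
    have "r a' = r a"
      using that a top by (meson order_antisym)
    then show "a' = a"
      using inj_onD[OF r] that(1) a Pl_subset_players by blast
  qed
  then have "(THE a. a \<in> P v \<and> (\<forall>b\<in>P v. r b \<le> r a)) = a"
    using a top by (intro the_equality) blast+
  then show ?thesis
    using Pl_imp_V[OF a] by (simp add: seeded_bracket_def)
qed

lemma seeded_bracket_top:
  assumes r: "inj_on r pl" and v: "v \<in> V"
  shows "seeded_bracket r v \<in> P v" "\<And>b. b \<in> P v \<Longrightarrow> r b \<le> r (seeded_bracket r v)"
proof -
  have "Max (r ` P v) \<in> r ` P v"
    using Pl_nonempty[OF v] finite_Pl by simp
  then obtain a where a: "a \<in> P v" "r a = Max (r ` P v)"
    by auto
  then have top: "r b \<le> r a" if "b \<in> P v" for b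
    using that finite_Pl by simp
  show "seeded_bracket r v \<in> P v" "\<And>b. b \<in> P v \<Longrightarrow> r b \<le> r (seeded_bracket r v)"
    using seeded_bracket_eqI[OF r a(1) top] a(1) top by simp_all
qed

lemma bracket_seeded:
  assumes r: "inj_on r pl"
  shows "bracket V E (seeded_bracket r)"
  unfolding bracket_def
proof (intro conjI ballI)
  show "seeded_bracket r \<in> extensional V"
    by (simp add: seeded_bracket_def extensional_def)
next
  fix v assume "v \<in> V"
  then show "seeded_bracket r v \<in> pl"
    using seeded_bracket_top[OF r] Pl_subset_players by blast
next
  fix a assume "a \<in> pl"
  then show "seeded_bracket r a = a"
    by (intro seeded_bracket_eqI[OF r]) (simp_all add: Pl_player)
next
  fix x assume x: "x \<in> M"
  then have "x \<in> V" by (simp add: matches_iff)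
  define a where "a = seeded_bracket r x"
  have top: "r b \<le> r a" if "b \<in> P x" for b
    using seeded_bracket_top(2)[OF r \<open>x \<in> V\<close> that] by (simp add: a_def)
  obtain u where u: "u \<in> in_nbrs E x" "a \<in> P u"
    using seeded_bracket_top(1)[OF r \<open>x \<in> V\<close>] Pl_match_UN[OF x] by (auto simp: a_def)
  have "seeded_bracket r u = a"
    using seeded_bracket_eqI[OF r u(2)] top Pl_match_UN[OF x] u(1) by blast
  then show "seeded_bracket r x \<in> seeded_bracket r ` in_nbrs E x"
    using u(1) by (force simp: a_def)
qed

lemma card_Pl_less_if_not_reach:
  assumes "b \<in> P w" "b \<in> P w'" "(w, w') \<notin> E\<^sup>*"
  shows "card (P w') < card (P w)"
proof -
  have "(w', w) \<in> E\<^sup>*"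
    using assms reach_linear by (auto simp: Pl_def)
  moreover have "w' \<noteq> w"
    using assms(3) by auto
  ultimately show ?thesis
    using card_Pl_less by (simp add: rtrancl_eq_or_trancl)
qed

lemma ex_bracket_realizing:
  assumes req_Pl: "\<And>a w. (a, w) \<in> R \<Longrightarrow> a \<in> P w"
    and req_consistent: "\<And>a w b w'. (a, w) \<in> R \<Longrightarrow> (b, w') \<in> R \<Longrightarrow> b \<in> P w \<Longrightarrow>
      (w, w') \<in> E\<^sup>* \<Longrightarrow> a = b"
  obtains B where "bracket V E B" "\<And>a w. (a, w) \<in> R \<Longrightarrow> B w = a"
proof -
  obtain t :: "'v \<Rightarrow> nat" where t: "inj_on t pl"
    using ex_inj_players_nat by blast
  \<comment> \<open>a player requested at a match w is seeded above every player whose requests all lie below w\<close>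
  define k where "k b = Max (insert 0 ((\<lambda>w. card (P w)) ` (R `` {b})))" for b
  define r where "r b = (k b, t b)" for b
  have r: "inj_on r pl"
    using t by (auto simp: r_def inj_on_def)
  have "R `` {b} \<subseteq> V" for b
    using Pl_imp_V req_Pl by blast
  then have finite_req: "finite (R `` {b})" for b
    using finite_subset finite_V by blast
  have "seeded_bracket r w = a" if aw: "(a, w) \<in> R" for a w
  proof (rule seeded_bracket_eqI[OF r req_Pl[OF aw]])
    fix b assume b: "b \<in> P w"
    show "r b \<le> r a"
    proof (cases "b = a")
      case False
      have "card (P w') < card (P w)" if "(b, w') \<in> R" for w'
        using card_Pl_less_if_not_reach[OF b req_Pl[OF that]] req_consistent[OF aw that b] False
        by blast
      moreover have "0 < card (P w)"
        using b finite_Pl card_gt_0_iff by blast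
      ultimately have "k b < card (P w)"
        using finite_req by (simp add: k_def)
      moreover have "card (P w) \<le> k a"
        using aw finite_req by (simp add: k_def)
      ultimately show ?thesis
        by (simp add: r_def)
    qed simp
  qed
  then show ?thesis
    using that bracket_seeded[OF r] by blast
qed

lemma ex_brackets_swapping_top_seeds:
  assumes "a \<noteq> a'"
  obtains B B' where "bracket V E B" "bracket V E B'"
    and "\<And>y. a \<in> P y \<Longrightarrow> B y = a" and "\<And>y. a' \<in> P y \<Longrightarrow> B' y = a'"
    and "\<And>y. y \<in> V \<Longrightarrow> a \<notin> P y \<or> a' \<notin> P y \<Longrightarrow> B y = B' y"
proof -
  obtain t :: "'v \<Rightarrow> nat" where t: "inj_on t pl"
    using ex_inj_players_nat by blast
  define r where "r b = (if b = a then 2 else if b = a' then 1 else 0 :: nat, t b)" for b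
  define r' where "r' b = (if b = a' then 2 else if b = a then 1 else 0 :: nat, t b)" for b
  have inj: "inj_on r pl" "inj_on r' pl"
    using t by (auto simp: r_def r'_def inj_on_def)
  define B where "B = seeded_bracket r"
  define B' where "B' = seeded_bracket r'"
  have B_a: "B y = a" if "a \<in> P y" for y
    unfolding B_def using that assms by (intro seeded_bracket_eqI[OF inj(1)]) (auto simp: r_def)
  have B'_a': "B' y = a'" if "a' \<in> P y" for y
    unfolding B'_def using that assms by (intro seeded_bracket_eqI[OF inj(2)]) (auto simp: r'_def)
  have "B y = B' y" if y: "y \<in> V" and not_both: "a \<notin> P y \<or> a' \<notin> P y" for y
  proof -
    consider "a \<in> P y" "a' \<notin> P y" | "a' \<in> P y" "a \<notin> P y" | "a \<notin> P y" "a' \<notin> P y"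
      using not_both by blast
    then show ?thesis
    proof cases
      case 1
      then have "B' y = a"
        unfolding B'_def by (intro seeded_bracket_eqI[OF inj(2)]) (auto simp: r'_def)
      then show ?thesis using B_a 1 by simp
    next
      case 2
      then have "B y = a'"
        unfolding B_def by (intro seeded_bracket_eqI[OF inj(1)]) (auto simp: r_def)
      then show ?thesis using B'_a' 2 by simp
    next
      case 3
      then have "r' b = r b" if "b \<in> P y" for b
        using that by (auto simp: r_def r'_def)
      then have "seeded_bracket r' y = seeded_bracket r y"
        using seeded_bracket_top[OF inj(1) y] by (intro seeded_bracket_eqI[OF inj(2)]) auto
      then show ?thesis
        by (simp add: B_def B'_def)
    qed
  qed
  then show thesis
    using that bracket_seeded inj B_a B'_a' unfolding B_def B'_def by blast
qed

lemma resolving_picks_one_of: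
  assumes res: "resolving V E \<sigma> BB"
    and u: "u \<in> in_nbrs E x" "u' \<in> in_nbrs E x" "u \<noteq> u'"
    and a: "a \<in> P u" "a' \<in> P u'"
  shows "\<exists>Bi\<in>BB. Bi x = a \<or> Bi x = a'"
proof (rule ccontr)
  assume none: "\<not> ?thesis"
  have "a \<noteq> a'"
    using Pl_in_nbrs_disjoint u a by blast
  obtain B B' where B: "bracket V E B" "bracket V E B'"
    and B_a: "\<And>y. a \<in> P y \<Longrightarrow> B y = a" and B'_a': "\<And>y. a' \<in> P y \<Longrightarrow> B' y = a'"
    and agree: "\<And>y. y \<in> V \<Longrightarrow> a \<notin> P y \<or> a' \<notin> P y \<Longrightarrow> B y = B' y"
    by (rule ex_brackets_swapping_top_seeds[OF \<open>a \<noteq> a'\<close>]) blast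
  have a_x: "a \<in> P x" "a' \<in> P x"
    using Pl_match_UN[OF edge_target_match] u a by (auto simp: in_nbrs_def)
  then have "B \<noteq> B'"
    using B_a B'_a' \<open>a \<noteq> a'\<close> by auto
  then obtain Bi where Bi: "Bi \<in> BB" "score V E \<sigma> Bi B \<noteq> score V E \<sigma> Bi B'"
    using res B unfolding resolving_def by blast
  have Bi_bracket: "bracket V E Bi"
    using res Bi(1) by (simp add: resolving_def)
  \<comment> \<open>B and B' differ only above x, where Bi lets neither a nor a' win\<close>
  have "Bi y = B y \<longleftrightarrow> Bi y = B' y" if "y \<in> M" for y
  proof (cases "a \<in> P y \<and> a' \<in> P y")
    case True
    then have "(x, y) \<in> E\<^sup>*"
      using reach_if_Pl_meets_two_in_nbrs u a by blast
    then have "Bi y \<noteq> a" "Bi y \<noteq> a'"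
      using bracket_winner_won_below[OF Bi_bracket] a_x none Bi(1) by blast+
    then show ?thesis
      using True B_a B'_a' by simp
  next
    case False
    then show ?thesis
      using agree that by (simp add: matches_iff)
  qed
  then have "{y \<in> M. Bi y = B y} = {y \<in> M. Bi y = B' y}"
    by blast
  then show False
    using Bi(2) by (simp add: score_def)
qed

lemma resolving_unseen_within_one_in_nbr:
  assumes res: "resolving V E \<sigma> BB" and x: "x \<in> M"
  obtains u where "u \<in> in_nbrs E x" "P x - (\<lambda>B. B x) ` BB \<subseteq> P u"
proof (cases "P x - (\<lambda>B. B x) ` BB = {}")
  case True
  then show ?thesis
    using that x by (auto simp: matches_iff)
next
  case False
  then obtain a u where a: "a \<in> P x - (\<lambda>B. B x) ` BB" "u \<in> in_nbrs E x" "a \<in> P u"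
    using Pl_match_UN[OF x] by blast
  have "a' \<in> P u" if a': "a' \<in> P x - (\<lambda>B. B x) ` BB" for a'
  proof -
    obtain u' where u': "u' \<in> in_nbrs E x" "a' \<in> P u'"
      using a' Pl_match_UN[OF x] by blast
    have "\<not> (\<exists>Bi\<in>BB. Bi x = a \<or> Bi x = a')"
      using a(1) a' by auto
    then have "u' = u"
      using resolving_picks_one_of[OF res a(2) u'(1) _ a(3) u'(2)] by blast
    then show ?thesis
      using u'(2) by simp
  qed
  then show ?thesis
    using that a(2) by blast
qed

lemma card_Pl_le_resolving:
  assumes fin: "finite BB" and res: "resolving V E \<sigma> BB" and x: "x \<in> M"
  shows "card (P x) \<le> card BB + Max ((\<lambda>u. card (P u)) ` in_nbrs E x)"
proof -
  define W where "W = (\<lambda>B. B x) ` BB"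
  obtain u where u: "u \<in> in_nbrs E x" "P x - W \<subseteq> P u"
    using resolving_unseen_within_one_in_nbr[OF res x] unfolding W_def by blast
  have "card (P x) = card (P x \<inter> W) + card (P x - W)"
    using card_Int_Diff[OF finite_Pl] .
  also have "\<dots> \<le> card BB + card (P u)"
  proof (rule add_mono)
    have "card (P x \<inter> W) \<le> card W"
      using fin by (intro card_mono) (auto simp: W_def)
    also have "\<dots> \<le> card BB"
      unfolding W_def using card_image_le[OF fin] .
    finally show "card (P x \<inter> W) \<le> card BB" .
    show "card (P x - W) \<le> card (P u)"
      using card_mono[OF finite_Pl u(2)] .
  qed
  also have "card (P u) \<le> Max ((\<lambda>u. card (P u)) ` in_nbrs E x)"
    using u(1) finite_in_nbrs by simp
  finally show ?thesis
    by simp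
qed

lemma brackets_differ_at_lowest:
  assumes B: "bracket V E B" and B': "bracket V E B'" and "B \<noteq> B'"
  obtains v where "v \<in> M" "B v \<noteq> B' v" "\<And>u. u \<in> in_nbrs E v \<Longrightarrow> B u = B' u"
proof -
  define D where "D = {v \<in> V. B v \<noteq> B' v}"
  have "D \<noteq> {}"
  proof
    assume "D = {}"
    have "B = B'"
    proof (rule extensionalityI)
      show "B \<in> extensional V" "B' \<in> extensional V"
        using B B' by (simp_all add: bracket_def)
      show "\<And>v. v \<in> V \<Longrightarrow> B v = B' v"
        using \<open>D = {}\<close> by (auto simp: D_def)
    qed
    then show False
      using \<open>B \<noteq> B'\<close> by simp
  qed
  then obtain v where v: "v \<in> D" and lowest: "\<And>u. (u, v) \<in> E \<Longrightarrow> u \<notin> D"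
    using wfE_min[OF wf_E] by blast
  have "v \<notin> pl"
    using v bracket_player[OF B] bracket_player[OF B'] by (auto simp: D_def)
  then have "v \<in> M"
    using v by (simp add: D_def matches_def)
  then show thesis
  proof (rule that)
    show "B v \<noteq> B' v"
      using v by (simp add: D_def)
    fix u assume u: "u \<in> in_nbrs E v"
    then have "u \<notin> D"
      using lowest by (simp add: in_nbrs_def)
    then show "B u = B' u"
      using in_nbrs_V[OF u] by (simp add: D_def)
  qed
qed

lemma differing_brackets_light_winner:
  assumes B: "bracket V E B" and B': "bracket V E B'" and "B \<noteq> B'"
    and child: "\<And>v. v \<in> M \<Longrightarrow> ch v \<in> in_nbrs E v"
  obtains v w where "v \<in> M" "B v \<noteq> B' v" "w = B v \<or> w = B' v" "w \<in> P v - P (ch v)"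
proof -
  obtain v where v: "v \<in> M" "B v \<noteq> B' v" and below: "\<And>u. u \<in> in_nbrs E v \<Longrightarrow> B u = B' u"
    using brackets_differ_at_lowest[OF B B' \<open>B \<noteq> B'\<close>] by blast
  obtain u where u: "u \<in> in_nbrs E v" "B v = B u"
    using bracket_winner_from_in_nbr[OF B v(1)] by blast
  obtain u' where "u' \<in> in_nbrs E v" "B' v = B' u'"
    using bracket_winner_from_in_nbr[OF B' v(1)] by blast
  then have u': "u' \<in> in_nbrs E v" "B' v = B u'"
    using below by simp_all
  have light: "B w \<in> P v - P (ch v)" if w: "w \<in> in_nbrs E v" "w \<noteq> ch v" for w
  proof -
    have "B w \<in> P w"
      using bracket_Pl[OF B in_nbrs_V[OF w(1)]] .
    moreover have "P w \<subseteq> P v"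
      using w(1) Pl_match_UN[OF v(1)] by blast
    ultimately show ?thesis
      using Pl_in_nbrs_disjoint[OF w(1) child[OF v(1)]] w(2) by blast
  qed
  consider "u \<noteq> ch v" | "u' \<noteq> ch v"
    using u u' v(2) by auto
  then show thesis
  proof cases
    case 1
    then show thesis
      using that[OF v _ light[OF u(1)]] u(2) by simp
  next
    case 2
    then show thesis
      using that[OF v _ light[OF u'(1)]] u'(2) by simp
  qed
qed

lemma resolving_if_covers:
  assumes dss: "distinct_subset_sums V E \<sigma>"
    and brackets: "\<And>B. B \<in> BB \<Longrightarrow> bracket V E B"
    and child: "\<And>v. v \<in> M \<Longrightarrow> ch v \<in> in_nbrs E v"
    and covers: "\<And>v a. v \<in> M \<Longrightarrow> a \<in> P v - P (ch v) \<Longrightarrow> \<exists>Bi\<in>BB. Bi v = a"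
  shows "resolving V E \<sigma> BB"
  unfolding resolving_def
proof (intro conjI ballI allI impI)
  fix B B' assume "bracket V E B" "bracket V E B'" "B \<noteq> B'"
  then obtain v w where v: "v \<in> M" "B v \<noteq> B' v" and w: "w = B v \<or> w = B' v" "w \<in> P v - P (ch v)"
    using differing_brackets_light_winner child by metis
  obtain Bi where Bi: "Bi \<in> BB" "Bi v = w"
    using covers[OF v(1) w(2)] by blast
  have "{y \<in> M. Bi y = B y} \<noteq> {y \<in> M. Bi y = B' y}"
  proof
    assume "{y \<in> M. Bi y = B y} = {y \<in> M. Bi y = B' y}"
    then have "Bi v = B v \<longleftrightarrow> Bi v = B' v"
      using v(1) by blast
    then show False
      using Bi(2) v(2) w(1) by auto
  qed
  moreover have "{y \<in> M. Bi y = B y} \<subseteq> M" "{y \<in> M. Bi y = B' y} \<subseteq> M"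
    by auto
  ultimately have "score V E \<sigma> Bi B \<noteq> score V E \<sigma> Bi B'"
    using dss unfolding distinct_subset_sums_def score_def by blast
  then show "\<exists>Bi\<in>BB. score V E \<sigma> Bi B \<noteq> score V E \<sigma> Bi B'"
    using Bi(1) by blast
qed (rule brackets)

definition heavy_child :: "'v \<Rightarrow> 'v" where
  "heavy_child x = (SOME u. u \<in> in_nbrs E x \<and> card (P u) = Max ((\<lambda>u. card (P u)) ` in_nbrs E x))"

lemma heavy_child_max:
  assumes "x \<in> M"
  shows heavy_child_in_nbrs: "heavy_child x \<in> in_nbrs E x"
    and card_heavy_child: "card (P (heavy_child x)) = Max ((\<lambda>u. card (P u)) ` in_nbrs E x)"
proof -
  have "Max ((\<lambda>u. card (P u)) ` in_nbrs E x) \<in> (\<lambda>u. card (P u)) ` in_nbrs E x"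
    using assms finite_in_nbrs by (simp add: matches_iff)
  then have "\<exists>u. u \<in> in_nbrs E x \<and> card (P u) = Max ((\<lambda>u. card (P u)) ` in_nbrs E x)"
    by (metis (mono_tags) imageE)
  from someI_ex[OF this]
  show "heavy_child x \<in> in_nbrs E x"
    and "card (P (heavy_child x)) = Max ((\<lambda>u. card (P u)) ` in_nbrs E x)"
    unfolding heavy_child_def by blast+
qed

definition light_players :: "'v \<Rightarrow> 'v set" where
  "light_players x = P x - P (heavy_child x)"

lemma card_light_players:
  assumes "x \<in> M"
  shows "card (light_players x) = card (P x) - Max ((\<lambda>u. card (P u)) ` in_nbrs E x)"
proof -
  have "P (heavy_child x) \<subseteq> P x"
    using Pl_mono[OF r_into_rtrancl] heavy_child_in_nbrs[OF assms] by (simp add: in_nbrs_def)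
  then show ?thesis
    using card_Diff_subset[OF finite_Pl] card_heavy_child[OF assms] by (simp add: light_players_def)
qed

(* z lies on the path descending from the final through heavy children *)
definition on_heavy_path :: "'v \<Rightarrow> bool" where
  "on_heavy_path z \<longleftrightarrow> z \<in> M \<and> (\<forall>y. (z, y) \<in> E\<^sup>+ \<longrightarrow> (z, heavy_child y) \<in> E\<^sup>*)"

lemma light_player_joins_heavy_path:
  assumes v: "v \<in> M" and a: "a \<in> light_players v"
  obtains z where "on_heavy_path z" "(v, z) \<in> E\<^sup>*" "a \<in> light_players z"
proof -
  \<comment> \<open>the topmost match above v that a does not enter through the heavy child\<close>
  define Z where "Z = {z \<in> M. (v, z) \<in> E\<^sup>* \<and> a \<notin> P (heavy_child z)}"
  have "Z \<noteq> {}" "finite Z"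
    using v a finite_V by (auto simp: Z_def light_players_def matches_def)
  then have "Max ((\<lambda>z. card (P z)) ` Z) \<in> (\<lambda>z. card (P z)) ` Z"
    by simp
  then obtain z where z: "z \<in> Z" and "card (P z) = Max ((\<lambda>z. card (P z)) ` Z)"
    by auto
  then have top: "card (P y) \<le> card (P z)" if "y \<in> Z" for y
    using that \<open>finite Z\<close> by simp
  have vz: "(v, z) \<in> E\<^sup>*"
    using z by (simp add: Z_def)
  have a_z: "(a, z) \<in> E\<^sup>*" "a \<in> P z"
    using a Pl_mono[OF vz] by (auto simp: light_players_def Pl_def)
  have "(z, heavy_child y) \<in> E\<^sup>*" if zy: "(z, y) \<in> E\<^sup>+" for y
  proof -
    have y: "y \<in> M"
      using trancl_target_match[OF zy] .
    have "y \<notin> Z"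
      using top card_Pl_less[OF zy] by fastforce
    moreover have "(v, y) \<in> E\<^sup>*"
      using vz zy by simp
    ultimately have "(a, heavy_child y) \<in> E\<^sup>*"
      using y by (simp add: Z_def Pl_def)
    then have "(z, heavy_child y) \<in> E\<^sup>* \<or> (heavy_child y, z) \<in> E\<^sup>*"
      using reach_linear a_z(1) by blast
    moreover have "(heavy_child y, y) \<in> E"
      using heavy_child_in_nbrs[OF y] by (simp add: in_nbrs_def)
    ultimately show ?thesis
      using reach_from_edge not_reach_back[OF zy] by blast
  qed
  then have "on_heavy_path z"
    using z by (simp add: on_heavy_path_def Z_def)
  then show thesis
    using that vz a_z z by (simp add: light_players_def Z_def)
qed

lemma ex_bracket_winning_heavy_path:
  assumes idx_inj: "\<And>z. z \<in> M \<Longrightarrow> inj_on (idx z) (light_players z)"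
  obtains B where "bracket V E B"
    and "\<And>a z. on_heavy_path z \<Longrightarrow> a \<in> light_players z \<Longrightarrow> idx z a = i \<Longrightarrow> B z = a"
proof -
  define R where "R = {(a, z). on_heavy_path z \<and> a \<in> light_players z \<and> idx z a = i}"
  have req_Pl: "a \<in> P w" if "(a, w) \<in> R" for a w
    using that by (simp add: R_def light_players_def)
  have req_consistent: "a = b"
    if aw: "(a, w) \<in> R" and bw': "(b, w') \<in> R" and b: "b \<in> P w" and ww': "(w, w') \<in> E\<^sup>*"
    for a w b w'
  proof (cases "w = w'")
    case True
    then show ?thesis
      using aw bw' idx_inj inj_onD by (fastforce simp: R_def on_heavy_path_def)
  next
    case False
    then have "(w, w') \<in> E\<^sup>+"
      using ww' by (simp add: rtrancl_eq_or_trancl)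
    then have "(w, heavy_child w') \<in> E\<^sup>*"
      using aw by (simp add: R_def on_heavy_path_def)
    then have "b \<in> P (heavy_child w')"
      using b Pl_mono by blast
    then show ?thesis
      using bw' by (simp add: R_def light_players_def)
  qed
  have "\<exists>B. bracket V E B \<and> (\<forall>a w. (a, w) \<in> R \<longrightarrow> B w = a)"
    by (rule ex_bracket_realizing[of R]) (use req_Pl req_consistent in blast)+
  then show thesis
    using that unfolding R_def by blast
qed

lemma ex_covering_brackets:
  assumes D: "\<And>x. x \<in> M \<Longrightarrow> card (P x) - Max ((\<lambda>u. card (P u)) ` in_nbrs E x) \<le> D"
  obtains Bk where "\<And>i. bracket V E (Bk i)"
    and "\<And>v a. v \<in> M \<Longrightarrow> a \<in> light_players v \<Longrightarrow> \<exists>i<D. Bk i v = a"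
proof -
  have "\<exists>f. f ` light_players z \<subseteq> {..<D} \<and> inj_on f (light_players z)" if "z \<in> M" for z
    using card_le_inj[of "light_players z" "{..<D}"] card_light_players[OF that] D[OF that]
    by (simp add: light_players_def finite_Pl)
  then obtain idx where idx: "\<And>z. z \<in> M \<Longrightarrow> idx z ` light_players z \<subseteq> {..<D}"
    "\<And>z. z \<in> M \<Longrightarrow> inj_on (idx z) (light_players z)"
    by metis
  have "\<exists>B. bracket V E B \<and>
      (\<forall>a z. on_heavy_path z \<longrightarrow> a \<in> light_players z \<longrightarrow> idx z a = i \<longrightarrow> B z = a)" for i
    using ex_bracket_winning_heavy_path[OF idx(2), of i] by metis
  then obtain Bk where Bk: "\<And>i. bracket V E (Bk i)"
    "\<And>i a z. on_heavy_path z \<Longrightarrow> a \<in> light_players z \<Longrightarrow> idx z a = i \<Longrightarrow> Bk i z = a"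
    by metis
  show thesis
  proof (rule that[OF Bk(1)])
    fix v a assume v: "v \<in> M" and a: "a \<in> light_players v"
    then obtain z where z: "on_heavy_path z" "(v, z) \<in> E\<^sup>*" "a \<in> light_players z"
      by (rule light_player_joins_heavy_path)
    have "z \<in> M"
      using z(1) by (simp add: on_heavy_path_def)
    then have "idx z a < D"
      using idx(1) z(3) by blast
    moreover have "Bk (idx z a) v = a"
      using bracket_winner_won_below[OF Bk(1) z(2)] Bk(2)[OF z(1,3) refl] a
      by (simp add: light_players_def)
    ultimately show "\<exists>i<D. Bk i v = a"
      by blast
  qed
qed

lemma ex_small_resolving:
  assumes dss: "distinct_subset_sums V E \<sigma>"
    and D: "\<And>x. x \<in> M \<Longrightarrow> card (P x) - Max ((\<lambda>u. card (P u)) ` in_nbrs E x) \<le> D"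
  shows "\<exists>BB. finite BB \<and> resolving V E \<sigma> BB \<and> card BB \<le> D"
proof -
  obtain Bk where Bk: "\<And>i. bracket V E (Bk i)"
    and covers: "\<And>v a. v \<in> M \<Longrightarrow> a \<in> light_players v \<Longrightarrow> \<exists>i<D. Bk i v = a"
    using ex_covering_brackets[OF D] by blast
  have "resolving V E \<sigma> (Bk ` {..<D})"
  proof (rule resolving_if_covers[OF dss _ heavy_child_in_nbrs])
    show "\<And>B. B \<in> Bk ` {..<D} \<Longrightarrow> bracket V E B"
      using Bk by blast
    fix v a assume "v \<in> M" "a \<in> P v - P (heavy_child v)"
    then obtain i where "i < D" "Bk i v = a"
      using covers by (auto simp: light_players_def)
    then show "\<exists>Bi\<in>Bk ` {..<D}. Bi v = a"
      by blast
  qed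
  moreover have "card (Bk ` {..<D}) \<le> D"
    using card_image_le[of "{..<D}" Bk] by simp
  ultimately show ?thesis
    by blast
qed

lemma matches_nonempty:
  assumes "card pl \<ge> 2"
  shows "M \<noteq> {}"
proof
  assume "M = {}"
  then have "E = {}"
    using edge_target_match by auto
  have "finite pl"
    using finite_V by (simp add: players_def)
  then obtain a b where "a \<in> pl" "b \<in> pl" "a \<noteq> b"
    using assms card_le_Suc0_iff_eq[of pl] by auto
  moreover have "s \<in> V \<and> out_nbrs E s = {}" if "s \<in> pl" for s
    using that \<open>E = {}\<close> by (simp add: players_def out_nbrs_def)
  ultimately show False
    using unique_sink by blast
qed

end

lemma metric_dim_eqI:
  assumes "\<exists>BB. finite BB \<and> resolving V E \<sigma> BB \<and> card BB \<le> d"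
    and "\<And>BB. finite BB \<Longrightarrow> resolving V E \<sigma> BB \<Longrightarrow> d \<le> card BB"
  shows "metric_dim V E \<sigma> = d"
proof (rule antisym)
  obtain BB where BB: "finite BB" "resolving V E \<sigma> BB" "card BB \<le> d"
    using assms(1) by blast
  then have "metric_dim V E \<sigma> \<le> card BB"
    unfolding metric_dim_def by (intro Least_le) blast
  then show "metric_dim V E \<sigma> \<le> d"
    using BB(3) by simp
  have "\<exists>BB. finite BB \<and> resolving V E \<sigma> BB \<and> card BB = metric_dim V E \<sigma>"
    unfolding metric_dim_def by (rule LeastI_ex) (use BB in blast)
  then obtain BB' where "finite BB'" "resolving V E \<sigma> BB'" "card BB' = metric_dim V E \<sigma>"
    by blast
  then show "d \<le> metric_dim V E \<sigma>"
    using assms(2) by metis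
qed

theorem lemma5p7:
  fixes V :: "'v set" and E :: "('v \<times> 'v) set" and \<sigma> :: "'v \<Rightarrow> real"
  assumes "single_elim_tournament V E"
    and "card (players V E) \<ge> 2"
    and "scoring_system V E \<sigma>"
    and "distinct_subset_sums V E \<sigma>"
  shows "metric_dim V E \<sigma> =
    Max ((\<lambda>x. card (Pl V E x) - Max ((\<lambda>u. card (Pl V E u)) ` in_nbrs E x)) ` matches V E)"
proof -
  interpret tournament V E
    by (rule tournament.intro) (rule assms(1))
  let ?f = "\<lambda>x. card (P x) - Max ((\<lambda>u. card (P u)) ` in_nbrs E x)"
  have finite_M: "finite M"
    using finite_V by (simp add: matches_def)
  show ?thesis
  proof (rule metric_dim_eqI)
    show "\<exists>BB. finite BB \<and> resolving V E \<sigma> BB \<and> card BB \<le> Max (?f ` M)"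
      using ex_small_resolving[OF assms(4), of "Max (?f ` M)"] finite_M by simp
    fix BB assume "finite BB" "resolving V E \<sigma> BB"
    then have "?f x \<le> card BB" if "x \<in> M" for x
      using card_Pl_le_resolving[OF _ _ that] by (simp add: le_diff_conv add.commute)
    then show "Max (?f ` M) \<le> card BB"
      using finite_M matches_nonempty[OF assms(2)] by simp
  qed
qed

end
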